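(* Suppose A1–A3 and A4' hold and let $\{x_k\}$ be generated by Algorithm 1. Then $\lim_{k\to\infty}\|\nabla f(x_k)\|=0$.
   Context: Let $(X,\langle\cdot,\cdot\rangle)$ be a real Hilbert space with induced norm $\|\cdot\|$, and $f:X\to\mathbb{R}$ Fréchet differentiable with gradient $\nabla f$. Algorithm 1 (general non-monotone descent algorithm): parameters $x_0\in X$, $\alpha_0>0$, $\beta,\rho\in(0,1)$. For $k=0,1,2,\dots$: choose $d_k\in X$ with $\langle\nabla f(x_k),d_k\rangle<0$; then for $l=0,1,2,\dots$ choose a number $\nu_{k,l}\ge 0$ and test $$f(x_k+\alpha_k\beta^l d_k)\le f(x_k)+\rho\alpha_k\beta^l\langle\nabla f(x_k),d_k\rangle+\nu_{k,l};$$ let $l_k$ be the first $l$ for which this holds, set $\nu_k:=\nu_{k,l_k}$, $x_{k+1}=x_k+\alpha_k\beta^{l_k}d_k$ and $\alpha_{k+1}=\alpha_k\beta^{l_k-1}$. It is assumed the algorithm generates infinite sequences (all $l_k$ finite). Assumptions: A1: $\nabla f$ is Lipschitz continuous with constant $L>0$. A2: there is $f_{low}\in\mathbb{R}$ with $f(x)\ge f_{low}$ for all $x\in X$. A3: there are constants $c_1,c_2>0$ with $\langle\nabla f(x_k),d_k\rangle\le -c_1\|\nabla f(x_k)\|^2$ and $\|d_k\|\le c_2\|\nabla f(x_k)\|$ for all $k$. A4': $\nu_k=o(\|\nabla f(x_k)\|^2)$, i.e. for every $\delta>0$ there is $n\in\mathbb{N}$ with $\nu_k\le\delta\|\nabla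 f(x_k)\|^2$ for all $k\ge n$. *)

theory Defs
  imports "HOL-Analysis.Analysis"
begin

end

theory Submission
  imports Defs "HOL-Analysis.Analysis"
begin

text \<open>Along a descent direction satisfying the angle and length conditions, a trial step fails the
  nonmonotone Armijo test only if it exceeds the fixed threshold \<open>(1 - \<rho>) c\<^sub>1 / (L c\<^sub>2\<^sup>2)\<close> (the
  descent lemma rules out shorter failing steps, since \<open>\<nu> \<ge> 0\<close>). Hence backtracking never
  drives the step sizes to zero, every accepted step decreases \<open>f\<close> by at least a fixed multiple
  of \<open>\<parallel>\<nabla>f(x\<^sub>k)\<parallel>\<^sup>2\<close> once \<open>\<nu>\<^sub>k\<close> is small compared to \<open>\<parallel>\<nabla>f(x\<^sub>k)\<parallel>\<^sup>2\<close>, and since \<open>f\<close> is bounded below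
  these squared norms are summable.\<close>

lemma descent_lemma:
  fixes f :: "'a :: real_inner \<Rightarrow> real" and g :: "'a \<Rightarrow> 'a"
  assumes grad: "\<And>y. (f has_derivative (\<lambda>h. inner (g y) h)) (at y)"
    and lip: "L-lipschitz_on UNIV g" and t: "t > 0"
  shows "f (x + t *\<^sub>R d) \<le> f x + t * inner (g x) d + L * t\<^sup>2 * (norm d)\<^sup>2"
proof -
  define \<phi> where "\<phi> s = f (x + s *\<^sub>R d)" for s
  have der: "(\<phi> has_derivative (\<lambda>h. inner (g (x + s *\<^sub>R d)) (h *\<^sub>R d))) (at s within {0..t})" for s
  proof -
    have "((\<lambda>s. x + s *\<^sub>R d) has_derivative (\<lambda>h. h *\<^sub>R d)) (at s within {0..t})"
      by (auto intro!: derivative_eq_intros)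
    from has_derivative_compose[OF this grad] show ?thesis unfolding \<phi>_def o_def by simp
  qed
  obtain s where s: "s \<in> {0<..<t}" and eq: "\<phi> t - \<phi> 0 = inner (g (x + s *\<^sub>R d)) ((t - 0) *\<^sub>R d)"
    using mvt_simple[OF t der] by blast
  have L: "L \<ge> 0" using lip by (simp add: lipschitz_on_def)
  have "inner (g (x + s *\<^sub>R d) - g x) d \<le> norm (g (x + s *\<^sub>R d) - g x) * norm d"
    by (rule norm_cauchy_schwarz)
  also have "\<dots> \<le> L * norm (s *\<^sub>R d) * norm d"
    using lipschitz_onD[OF lip, of "x + s *\<^sub>R d" x] by (simp add: dist_norm mult_right_mono)
  also have "\<dots> = (L * s) * (norm d)\<^sup>2"
    using s by (simp add: power2_eq_square)
  also have "\<dots> \<le> (L * t) * (norm d)\<^sup>2"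
    using s L by (intro mult_right_mono mult_left_mono) auto
  finally have "inner (g (x + s *\<^sub>R d)) d \<le> inner (g x) d + L * t * (norm d)\<^sup>2"
    by (simp add: inner_diff_left)
  hence "t * inner (g (x + s *\<^sub>R d)) d \<le> t * (inner (g x) d + L * t * (norm d)\<^sup>2)"
    using t by (intro mult_left_mono) auto
  thus ?thesis using eq unfolding \<phi>_def by (simp add: power2_eq_square algebra_simps)
qed

lemma armijo_failure_imp_step_gt:
  fixes f :: "'a :: real_inner \<Rightarrow> real" and g :: "'a \<Rightarrow> 'a"
  assumes grad: "\<And>y. (f has_derivative (\<lambda>h. inner (g y) h)) (at y)"
    and lip: "L-lipschitz_on UNIV g" and L: "L > 0"
    and rho: "\<rho> < 1" and c2: "c2 > 0"
    and angle: "inner (g x) d \<le> - c1 * (norm (g x))\<^sup>2"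
    and norm_d: "norm d \<le> c2 * norm (g x)"
    and g_nz: "g x \<noteq> 0" and t: "t > 0" and nu: "\<nu> \<ge> 0"
    and fails: "f (x + t *\<^sub>R d) > f x + \<rho> * t * inner (g x) d + \<nu>"
  shows "(1 - \<rho>) * c1 / (L * c2\<^sup>2) < t"
proof -
  have "\<rho> * t * inner (g x) d < t * inner (g x) d + L * t\<^sup>2 * (norm d)\<^sup>2"
    using fails descent_lemma[OF grad lip t, of x d] nu by linarith
  hence "t * ((1 - \<rho>) * (- inner (g x) d)) < t * (L * t * (norm d)\<^sup>2)"
    by (simp add: algebra_simps power2_eq_square)
  hence slope: "(1 - \<rho>) * (- inner (g x) d) < L * t * (norm d)\<^sup>2"
    using mult_less_cancel_left_pos[OF t] by blast
  have "(1 - \<rho>) * (c1 * (norm (g x))\<^sup>2) \<le> (1 - \<rho>) * (- inner (g x) d)"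
    using angle rho by (intro mult_left_mono) auto
  moreover have "L * t * (norm d)\<^sup>2 \<le> L * t * (c2 * norm (g x))\<^sup>2"
    using norm_d L t by (intro mult_left_mono power_mono) auto
  ultimately have "((1 - \<rho>) * c1) * (norm (g x))\<^sup>2 < (L * t * c2\<^sup>2) * (norm (g x))\<^sup>2"
    using slope by (simp add: power_mult_distrib algebra_simps)
  hence "(1 - \<rho>) * c1 < L * t * c2\<^sup>2" using g_nz by simp
  thus ?thesis using L c2 by (simp add: field_simps)
qed

text \<open>Accepting the first trial step \<open>\<alpha>\<^sub>k\<beta>\<^sup>l\<^sup>\<^sub>k\<close> makes \<open>\<alpha>\<^sub>k\<^sub>+\<^sub>1 = \<alpha>\<^sub>k/\<beta>\<close>; otherwise \<open>\<alpha>\<^sub>k\<^sub>+\<^sub>1 = \<alpha>\<^sub>k\<beta>\<^sup>l\<^sup>\<^sub>k\<^sup>-\<^sup>1\<close>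
  is itself a rejected trial step, hence larger than \<open>\<tau>\<close>.\<close>

lemma backtracking_initial_step_ge:
  fixes \<alpha> :: "nat \<Rightarrow> real" and l :: "nat \<Rightarrow> nat"
  assumes alpha0: "\<alpha> 0 > 0" and beta: "0 < \<beta>" "\<beta> < 1" and tau: "\<tau> > 0"
    and alpha_step: "\<And>k. \<alpha> (Suc k) = \<alpha> k * \<beta> powi (int (l k) - 1)"
    and rejected_gt: "\<And>k j. j < l k \<Longrightarrow> \<alpha> k > 0 \<Longrightarrow> \<alpha> k * \<beta> ^ j > \<tau>"
  shows "\<alpha> k \<ge> min (\<alpha> 0) \<tau>"
proof (induction k)
  case 0 then show ?case by simp
next
  case (Suc k)
  have apos: "\<alpha> k > 0" using Suc alpha0 tau by linarith
  show ?case
  proof (cases "l k")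
    case 0
    hence "\<alpha> (Suc k) = \<alpha> k / \<beta>"
      using alpha_step[of k] by (simp add: power_int_minus1_right field_simps)
    moreover have "\<alpha> k / \<beta> \<ge> \<alpha> k" using apos beta by (simp add: field_simps)
    ultimately show ?thesis using Suc by linarith
  next
    case (Suc j)
    hence "\<alpha> (Suc k) = \<alpha> k * \<beta> ^ j" using alpha_step[of k] by simp
    moreover have "\<alpha> k * \<beta> ^ j > \<tau>" using rejected_gt[OF _ apos] Suc by simp
    ultimately show ?thesis by simp
  qed
qed

lemma backtracking_accepted_step_ge:
  fixes \<alpha> :: "nat \<Rightarrow> real" and l :: "nat \<Rightarrow> nat"
  assumes alpha0: "\<alpha> 0 > 0" and beta: "0 < \<beta>" "\<beta> < 1" and tau: "\<tau> > 0"
    and alpha_step: "\<And>k. \<alpha> (Suc k) = \<alpha> k * \<beta> powi (int (l k) - 1)"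
    and rejected_gt: "\<And>k j. j < l k \<Longrightarrow> \<alpha> k > 0 \<Longrightarrow> \<alpha> k * \<beta> ^ j > \<tau>"
  shows "\<alpha> k * \<beta> ^ l k \<ge> \<beta> * min (\<alpha> 0) \<tau>"
proof -
  define m where "m = min (\<alpha> 0) \<tau>"
  have alow: "\<alpha> k \<ge> m"
    unfolding m_def by (rule backtracking_initial_step_ge[OF assms])
  have mpos: "m > 0" using alpha0 tau by (simp add: m_def)
  have "\<alpha> k * \<beta> ^ l k \<ge> \<beta> * m"
  proof (cases "l k")
    case 0
    have "\<beta> * m \<le> 1 * m" using beta mpos by (intro mult_right_mono) auto
    thus ?thesis using alow 0 by simp
  next
    case (Suc j)
    have "\<alpha> k * \<beta> ^ j > \<tau>" using rejected_gt[of j k] alow mpos Suc by simp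
    hence "\<beta> * (\<alpha> k * \<beta> ^ j) \<ge> \<beta> * m" using beta by (intro mult_left_mono) (auto simp: m_def)
    thus ?thesis using Suc by (simp add: mult_ac)
  qed
  thus ?thesis by (simp add: m_def)
qed

lemma armijo_acceptance_decrease:
  fixes g :: "'a :: real_inner"
  assumes accept: "f' \<le> f + \<rho> * t * inner g d + \<nu>"
    and rho: "\<rho> > 0" and c1: "c1 > 0"
    and angle: "inner g d \<le> - c1 * (norm g)\<^sup>2"
    and t0: "t\<^sub>0 \<ge> 0" and t: "t \<ge> t\<^sub>0"
    and nu: "\<nu> \<le> \<rho> * c1 * t\<^sub>0 / 2 * (norm g)\<^sup>2"
  shows "f' \<le> f - \<rho> * c1 * t\<^sub>0 / 2 * (norm g)\<^sup>2"
proof -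
  have "\<rho> * t * inner g d \<le> \<rho> * t * (- c1 * (norm g)\<^sup>2)"
    using angle rho t0 t by (intro mult_left_mono) auto
  also have "\<dots> = - (\<rho> * c1 * (norm g)\<^sup>2) * t" by simp
  also have "\<dots> \<le> - (\<rho> * c1 * (norm g)\<^sup>2) * t\<^sub>0"
    using t rho c1 by (intro mult_left_mono_neg) auto
  finally show ?thesis using accept nu by (simp add: algebra_simps)
qed

lemma sufficient_decrease_imp_tendsto_zero:
  fixes F G :: "nat \<Rightarrow> real"
  assumes bounded: "\<And>k. F k \<ge> F\<^sub>0" and c: "c > 0" and G: "\<And>k. G k \<ge> 0"
    and decrease: "\<And>k. k \<ge> n \<Longrightarrow> F (Suc k) \<le> F k - c * (G k)\<^sup>2"
  shows "G \<longlonglongrightarrow> 0"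
proof -
  have telescope: "c * (\<Sum>k<N. (G (k + n))\<^sup>2) \<le> F n - F (N + n)" for N
  proof (induction N)
    case 0 then show ?case by simp
  next
    case (Suc N)
    have "F (Suc (N + n)) \<le> F (N + n) - c * (G (N + n))\<^sup>2" by (rule decrease) simp
    thus ?case using Suc by (simp add: algebra_simps)
  qed
  have "(\<Sum>k<N. (G (k + n))\<^sup>2) \<le> (F n - F\<^sub>0) / c" for N
    using telescope[of N] bounded[of "N + n"] c by (simp add: field_simps mult.commute)
  hence "summable (\<lambda>k. (G (k + n))\<^sup>2)"
    by (intro summableI_nonneg_bounded) simp
  hence "(\<lambda>k. sqrt ((G (k + n))\<^sup>2)) \<longlonglongrightarrow> sqrt 0"
    by (intro tendsto_real_sqrt summable_LIMSEQ_zero)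
  hence "(\<lambda>k. G (k + n)) \<longlonglongrightarrow> 0" using G by simp
  thus ?thesis by (rule LIMSEQ_offset)
qed

theorem theorem4:
  fixes f :: "'a :: {real_inner, complete_space} \<Rightarrow> real"
    and g :: "'a \<Rightarrow> 'a"
    and x d :: "nat \<Rightarrow> 'a"
    and \<alpha> :: "nat \<Rightarrow> real"
    and \<beta> \<rho> L f_low c1 c2 :: real
    and \<nu> :: "nat \<Rightarrow> nat \<Rightarrow> real"
    and l :: "nat \<Rightarrow> nat"
  assumes grad: "\<And>y. (f has_derivative (\<lambda>h. inner (g y) h)) (at y)"
    and alpha0: "\<alpha> 0 > 0"
    and beta: "0 < \<beta>" "\<beta> < 1"
    and rho: "0 < \<rho>" "\<rho> < 1"
    and descent: "\<And>k. inner (g (x k)) (d k) < 0"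
    and nu_nonneg: "\<And>k j. \<nu> k j \<ge> 0"
    and ls_accept: "\<And>k. f (x k + (\<alpha> k * \<beta> ^ l k) *\<^sub>R d k)
        \<le> f (x k) + \<rho> * \<alpha> k * \<beta> ^ l k * inner (g (x k)) (d k) + \<nu> k (l k)"
    and ls_first: "\<And>k j. j < l k \<Longrightarrow> \<not> (f (x k + (\<alpha> k * \<beta> ^ j) *\<^sub>R d k)
        \<le> f (x k) + \<rho> * \<alpha> k * \<beta> ^ j * inner (g (x k)) (d k) + \<nu> k j)"
    and x_step: "\<And>k. x (Suc k) = x k + (\<alpha> k * \<beta> ^ l k) *\<^sub>R d k"
    and alpha_step: "\<And>k. \<alpha> (Suc k) = \<alpha> k * \<beta> powi (int (l k) - 1)"
    and A1: "L > 0" "L-lipschitz_on UNIV g"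
    and A2: "\<And>y. f y \<ge> f_low"
    and A3: "c1 > 0" "c2 > 0"
      "\<And>k. inner (g (x k)) (d k) \<le> - c1 * (norm (g (x k)))\<^sup>2"
      "\<And>k. norm (d k) \<le> c2 * norm (g (x k))"
    and A4': "\<And>\<delta>. \<delta> > 0 \<Longrightarrow> \<exists>n. \<forall>k\<ge>n. \<nu> k (l k) \<le> \<delta> * (norm (g (x k)))\<^sup>2"
  shows "(\<lambda>k. norm (g (x k))) \<longlonglongrightarrow> 0"
proof -
  define \<tau> where "\<tau> = (1 - \<rho>) * c1 / (L * c2\<^sup>2)"
  have \<tau>: "\<tau> > 0" using rho A1 A3 by (simp add: \<tau>_def)
  have rejected_gt: "\<alpha> k * \<beta> ^ j > \<tau>" if "j < l k" "\<alpha> k > 0" for k j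
    using armijo_failure_imp_step_gt[OF grad A1(2,1) rho(2) A3(2) A3(3,4), of k] descent[of k]
      ls_first[OF that(1)] nu_nonneg[of k j] beta that(2)
    by (fastforce simp: \<tau>_def mult.assoc)
  define t\<^sub>0 where "t\<^sub>0 = \<beta> * min (\<alpha> 0) \<tau>"
  have t\<^sub>0: "t\<^sub>0 > 0" using beta alpha0 \<tau> by (simp add: t\<^sub>0_def)
  define c where "c = \<rho> * c1 * t\<^sub>0 / 2"
  have c: "c > 0" using rho A3 t\<^sub>0 by (simp add: c_def)
  obtain n where n: "\<And>k. k \<ge> n \<Longrightarrow> \<nu> k (l k) \<le> c * (norm (g (x k)))\<^sup>2"
    using A4'[OF c] by blast
  have "f (x (Suc k)) \<le> f (x k) - c * (norm (g (x k)))\<^sup>2" if "k \<ge> n" for k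
    unfolding c_def x_step
  proof (rule armijo_acceptance_decrease[OF _ rho(1) A3(1) A3(3) less_imp_le[OF t\<^sub>0]])
    show "f (x k + (\<alpha> k * \<beta> ^ l k) *\<^sub>R d k)
        \<le> f (x k) + \<rho> * (\<alpha> k * \<beta> ^ l k) * inner (g (x k)) (d k) + \<nu> k (l k)"
      using ls_accept[of k] by (simp add: mult.assoc)
    show "t\<^sub>0 \<le> \<alpha> k * \<beta> ^ l k"
      unfolding t\<^sub>0_def by (rule backtracking_accepted_step_ge[OF alpha0 beta \<tau> alpha_step rejected_gt])
    show "\<nu> k (l k) \<le> \<rho> * c1 * t\<^sub>0 / 2 * (norm (g (x k)))\<^sup>2"
      using n[OF that] by (simp add: c_def)
  qed
  thus ?thesis
    by (intro sufficient_decrease_imp_tendsto_zero[OF A2 c]) auto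
qed

end
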